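(* For $d\in\mathbb N$, $f\in L^1(\mathbb R^d)\cap L^\infty(\mathbb R^d)$, $E>0$ and $\eta>0$, $$\Big|\int_{\mathbb R^d}\frac{f(q)}{q^2-E\pm i\eta}dq\Big|\le C_1(E,d)\|f\|_\infty\ln\Big(\frac1\eta+1\Big)+\sqrt2\,\|f\|_1,$$ where $C_1(E,d)=\sqrt2\big(E^{-1/2}(E+1)^{\frac{d-1}{2}}+E^{\frac{d-2}{2}}\big)|S_{d-1}|$.
   Context: $q^2=|q|^2$. $|S_{d-1}|$ is the $(d-1)$-dimensional surface measure of the unit sphere in $\mathbb R^d$ (with $|S_0|=2$). *)

theory Defs
  imports "HOL-Analysis.Analysis" "HOL-Probability.Essential_Supremum"
begin

text \<open>Surface measure of the unit sphere S_{d-1} in R^d: 2 pi^(d/2) / Gamma(d/2)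
  (gives 2 for d = 1, 2 pi for d = 2, 4 pi for d = 3).\<close>
definition sphere_area :: "nat \<Rightarrow> real" where
  "sphere_area d = 2 * pi powr (real d / 2) / Gamma (real d / 2)"

definition Linf_enorm :: "('a::euclidean_space \<Rightarrow> 'b::real_normed_vector) \<Rightarrow> ereal" where
  "Linf_enorm f = esssup lborel (\<lambda>q. ereal (norm (f q)))"

text \<open>L^infinity norm (meaningful when Linf_enorm f < infinity).\<close>
definition Linf_norm :: "('a::euclidean_space \<Rightarrow> 'b::real_normed_vector) \<Rightarrow> real" where
  "Linf_norm f = real_of_ereal (Linf_enorm f)"

definition L1_norm :: "('a::euclidean_space \<Rightarrow> 'b::real_normed_vector) \<Rightarrow> real" where
  "L1_norm f = (LINT q|lborel. norm (f q))"

definition C1 :: "real \<Rightarrow> nat \<Rightarrow> real" where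
  "C1 E d = sqrt 2 * (E powr (-1/2) * (E + 1) powr ((real d - 1) / 2)
                      + E powr ((real d - 2) / 2)) * sphere_area d"

end

theory Submission
  imports Defs
begin

(* Write z = |q|^2 - E + i sigma eta. Then |z| >= ||q|^2 - E| and sqrt 2 |z| >= ||q|^2 - E| + eta.
   Off the shell ||q|^2 - E| >= 1 the first bound gives |f/z| <= |f|, which contributes the L^1 term.
   On the shell |f/z| <= sqrt 2 ||f||_oo / (||q|^2 - E| + eta), a radial function, and polar coordinates
   turn its integral into |S_{d-1}| times an integral of r^(d-1) / (|r^2 - E| + eta) over the shell.
   With s = sqrt E, the inequality s |r - s| <= |r^2 - s^2| both confines the shell to |r - s| <= 1/s
   and bounds the integrand by r^(d-1) / (s (|r - s| + eta/s)); estimating r^(d-1) by its maximum on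
   either side of s, each half integrates to a constant times ln (1/eta + 1). *)

lemma sphere_area_nonneg: "sphere_area d \<ge> 0"
  unfolding sphere_area_def by (cases "d = 0") (auto intro!: divide_nonneg_pos)

lemma sphere_area_eq_unit_ball_vol:
  assumes "d > 0"
  shows "sphere_area d = real d * unit_ball_vol (real d)"
proof -
  have Gamma_step: "Gamma (real d / 2 + 1) = real d / 2 * Gamma (real d / 2)"
    using assms by (intro Gamma_plus1) (auto simp: nonpos_Ints_def)
  have "Gamma (real d / 2) > 0"
    using assms by simp
  with assms show ?thesis
    unfolding sphere_area_def unit_ball_vol_def Gamma_step by (simp add: field_simps)
qed

lemma C1_nonneg: "C1 E d \<ge> 0"
  by (simp add: C1_def sphere_area_nonneg)

definition radial_density :: "nat \<Rightarrow> real \<Rightarrow> real" where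
  "radial_density d r = indicator {0<..} r * sphere_area d * r ^ (d - 1)"

lemma radial_density_nonneg: "radial_density d r \<ge> 0"
  by (simp add: radial_density_def indicator_def sphere_area_nonneg)

lemma borel_measurable_radial_density [measurable]: "radial_density d \<in> borel_measurable borel"
  unfolding radial_density_def by measurable

lemma emeasure_density_radial_lessThan:
  assumes "d > 0"
  shows "emeasure (density lborel (\<lambda>r. ennreal (radial_density d r))) {..<a}
    = ennreal (unit_ball_vol d * max 0 a ^ d)"
proof -
  define b where "b = max 0 a"
  have "((\<lambda>r. unit_ball_vol d * r ^ d) has_real_derivative sphere_area d * r ^ (d - 1)) (at r)" for r
    using assms by (auto intro!: derivative_eq_intros simp: sphere_area_eq_unit_ball_vol)
  then have "((\<lambda>r. sphere_area d * r ^ (d - 1)) has_integral unit_ball_vol d * b ^ d - unit_ball_vol d * 0 ^ d) {0..b}"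
    by (intro fundamental_theorem_of_calculus)
       (auto simp: b_def has_real_derivative_iff_has_vector_derivative intro: has_vector_derivative_at_within)
  then have "((\<lambda>r. sphere_area d * r ^ (d - 1)) has_integral unit_ball_vol d * b ^ d) {0<..<b}"
    using assms by (simp add: has_integral_Icc_iff_Ioo zero_power)
  then have "(\<integral>\<^sup>+r. ennreal (indicator {0<..<b} r * (sphere_area d * r ^ (d - 1))) \<partial>lborel) = unit_ball_vol d * b ^ d"
    by (intro nn_integral_has_integral_lebesgue) (auto simp: sphere_area_nonneg)
  moreover have "ennreal (radial_density d r) * indicator {..<a} r
      = ennreal (indicator {0<..<b} r * (sphere_area d * r ^ (d - 1)))" for r
    by (auto simp: radial_density_def indicator_def b_def)
  ultimately show ?thesis
    by (simp add: emeasure_density b_def)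
qed

lemma emeasure_distr_norm_lessThan:
  "emeasure (distr lborel borel (norm :: 'a::euclidean_space \<Rightarrow> real)) {..<a}
    = ennreal (unit_ball_vol DIM('a) * max 0 a ^ DIM('a))"
proof -
  have "norm -` {..<a} = ball (0::'a) (max 0 a)"
    by (cases "a \<le> 0") (auto simp: ball_def max_def dest: order.strict_trans1[OF norm_ge_zero])
  then show ?thesis
    by (simp add: emeasure_distr emeasure_ball)
qed

lemma distr_norm_lborel:
  "distr (lborel :: 'a::euclidean_space measure) borel norm
    = density lborel (\<lambda>r. ennreal (radial_density DIM('a) r))"
  (is "?M = ?N")
proof (rule measure_eqI_generator_eq_countable[where E="range lessThan" and \<Omega>=UNIV
      and A="range (\<lambda>n::nat. {..<real n})"])
  show "Int_stable (range lessThan :: real set set)"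
  proof (rule Int_stableI, clarify)
    fix a b :: real
    show "{..<a} \<inter> {..<b} \<in> range lessThan"
      by (rule image_eqI[of _ _ "min a b"]) auto
  qed
  show "sets ?M = sigma_sets UNIV (range lessThan)" "sets ?N = sigma_sets UNIV (range lessThan)"
    by (simp_all add: borel_Iio)
  show "emeasure ?M X = emeasure ?N X" if "X \<in> range lessThan" for X
    using that by (auto simp: emeasure_distr_norm_lessThan emeasure_density_radial_lessThan)
  show "emeasure ?M X \<noteq> \<infinity>" if "X \<in> range (\<lambda>n::nat. {..<real n})" for X
    using that by (auto simp: emeasure_distr_norm_lessThan)
qed (auto intro: reals_Archimedean2)

lemma nn_integral_radial:
  assumes [measurable]: "g \<in> borel_measurable borel"
  shows "(\<integral>\<^sup>+q. g (norm q) \<partial>(lborel :: 'a::euclidean_space measure))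
    = (\<integral>\<^sup>+r. ennreal (radial_density DIM('a) r) * g r \<partial>lborel)"
proof -
  have "(\<integral>\<^sup>+q. g (norm q) \<partial>(lborel :: 'a measure)) = (\<integral>\<^sup>+r. g r \<partial>distr (lborel :: 'a measure) borel norm)"
    by (subst nn_integral_distr) auto
  also have "\<dots> = (\<integral>\<^sup>+r. ennreal (radial_density DIM('a) r) * g r \<partial>lborel)"
    by (simp add: distr_norm_lborel nn_integral_density)
  finally show ?thesis .
qed

lemma nn_integral_inverse_distance_right:
  assumes "c > 0" "U \<ge> 0"
  shows "(\<integral>\<^sup>+r. ennreal (indicator {p..p + U} r / (r - p + c)) \<partial>lborel) = ennreal (ln ((U + c) / c))"
proof -
  have "((\<lambda>r. ln (r - p + c)) has_real_derivative 1 / (r - p + c)) (at r within {p..p + U})"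
    if "r \<in> {p..p + U}" for r
    using that assms by (auto intro!: derivative_eq_intros)
  then have "((\<lambda>r. 1 / (r - p + c)) has_integral ln (p + U - p + c) - ln (p - p + c)) {p..p + U}"
    using assms by (intro fundamental_theorem_of_calculus) (auto simp: has_real_derivative_iff_has_vector_derivative)
  moreover have "ln (p + U - p + c) - ln (p - p + c) = ln ((U + c) / c)"
    using assms by (simp add: ln_div)
  ultimately have "(\<integral>\<^sup>+r. ennreal (indicator {p..p + U} r * (1 / (r - p + c))) \<partial>lborel) = ln ((U + c) / c)"
    using assms by (intro nn_integral_has_integral_lebesgue) auto
  then show ?thesis
    by simp
qed

lemma nn_integral_inverse_distance_left:
  assumes "c > 0" "U \<ge> 0"
  shows "(\<integral>\<^sup>+r. ennreal (indicator {p - U..p} r / (p - r + c)) \<partial>lborel) = ennreal (ln ((U + c) / c))"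
proof -
  have "(\<integral>\<^sup>+r. ennreal (indicator {p - U..p} r / (p - r + c)) \<partial>lborel)
      = (\<integral>\<^sup>+r. ennreal (indicator {p..p + U} r / (r - p + c)) \<partial>lborel)"
    by (subst nn_integral_real_affine[where t="2 * p" and c="-1"])
       (auto intro!: nn_integral_cong simp: indicator_def)
  then show ?thesis
    using nn_integral_inverse_distance_right[OF assms] by simp
qed

lemma abs_diff_squares_ge:
  fixes r s :: real
  assumes "r \<ge> 0" "s \<ge> 0"
  shows "s * \<bar>r - s\<bar> \<le> \<bar>r\<^sup>2 - s\<^sup>2\<bar>"
proof -
  have "r\<^sup>2 - s\<^sup>2 = (r + s) * (r - s)"
    by algebra
  then have "\<bar>r\<^sup>2 - s\<^sup>2\<bar> = (r + s) * \<bar>r - s\<bar>"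
    using assms by (simp add: abs_mult)
  then show ?thesis
    using assms by (simp add: mult_right_mono)
qed

definition shell_kernel :: "real \<Rightarrow> real \<Rightarrow> real \<Rightarrow> real" where
  "shell_kernel E \<eta> r = indicator {r. \<bar>r\<^sup>2 - E\<bar> < 1} r * (sqrt 2 / (\<bar>r\<^sup>2 - E\<bar> + \<eta>))"

lemma shell_kernel_nonneg: "\<eta> > 0 \<Longrightarrow> shell_kernel E \<eta> r \<ge> 0"
  by (simp add: shell_kernel_def indicator_def)

lemma borel_measurable_shell_kernel [measurable]: "shell_kernel E \<eta> \<in> borel_measurable borel"
  unfolding shell_kernel_def by measurable

lemma power_div_shell_le:
  fixes r s \<eta> A :: real
  assumes "0 \<le> r" "0 < s" "0 < \<eta>" "r ^ n \<le> A"
  shows "r ^ n / (\<bar>r\<^sup>2 - s\<^sup>2\<bar> + \<eta>) \<le> A / s / (\<bar>r - s\<bar> + \<eta> / s)"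
proof -
  have "s * (\<bar>r - s\<bar> + \<eta> / s) \<le> \<bar>r\<^sup>2 - s\<^sup>2\<bar> + \<eta>"
    using abs_diff_squares_ge[of r s] assms by (simp add: distrib_left)
  moreover have "0 \<le> A"
    using assms zero_le_power order_trans by blast
  moreover have "0 < s * (\<bar>r - s\<bar> + \<eta> / s)"
    using assms by (intro mult_pos_pos add_nonneg_pos) auto
  ultimately have "r ^ n / (\<bar>r\<^sup>2 - s\<^sup>2\<bar> + \<eta>) \<le> A / (s * (\<bar>r - s\<bar> + \<eta> / s))"
    using assms by (intro frac_le) auto
  then show ?thesis
    by simp
qed

lemma power_div_shell_le_outer:
  fixes E \<eta> r :: real
  assumes "E > 0" "\<eta> > 0" "d \<ge> 1" "sqrt E \<le> r" "r\<^sup>2 < E + 1"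
  shows "r ^ (d - 1) / (\<bar>r\<^sup>2 - E\<bar> + \<eta>)
    \<le> (E + 1) powr ((real d - 1) / 2) * E powr (-1/2) / (r - sqrt E + \<eta> / sqrt E)"
proof -
  have "0 \<le> sqrt E"
    using assms by simp
  then have "0 \<le> r"
    using assms by linarith
  moreover have "r \<le> sqrt (E + 1)"
    using assms by (intro real_le_rsqrt) auto
  ultimately have "r ^ (d - 1) \<le> sqrt (E + 1) ^ (d - 1)"
    by (intro power_mono)
  also have "\<dots> = (E + 1) powr ((real d - 1) / 2)"
    using assms by (simp add: powr_half_sqrt[symmetric] powr_realpow[symmetric] powr_powr)
  finally show ?thesis
    using power_div_shell_le[of r "sqrt E" \<eta> "d - 1"] assms
    by (simp add: powr_minus_divide powr_half_sqrt)
qed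

lemma power_div_shell_le_inner:
  fixes E \<eta> r :: real
  assumes "E > 0" "\<eta> > 0" "d \<ge> 1" "0 \<le> r" "r \<le> sqrt E"
  shows "r ^ (d - 1) / (\<bar>r\<^sup>2 - E\<bar> + \<eta>) \<le> E powr ((real d - 2) / 2) / (sqrt E - r + \<eta> / sqrt E)"
proof -
  have "r ^ (d - 1) \<le> sqrt E ^ (d - 1)"
    using assms by (intro power_mono) auto
  also have "\<dots> = sqrt E * E powr ((real d - 2) / 2)"
    using assms by (simp add: powr_half_sqrt[symmetric] powr_realpow[symmetric] powr_powr
        powr_add[symmetric] field_simps)
  finally show ?thesis
    using power_div_shell_le[of r "sqrt E" \<eta> "d - 1" "sqrt E * E powr ((real d - 2) / 2)"] assms
    by simp
qed

lemma radial_shell_kernel_le: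
  fixes E \<eta> r :: real
  assumes E: "E > 0" and \<eta>: "\<eta> > 0" and d: "d \<ge> 1"
  defines "s \<equiv> sqrt E"
  shows "radial_density d r * shell_kernel E \<eta> r
    \<le> sqrt 2 * sphere_area d *
       ((E + 1) powr ((real d - 1) / 2) * E powr (-1/2) * (indicator {s..s + 1/s} r / (r - s + \<eta>/s))
        + E powr ((real d - 2) / 2) * (indicator {s - 1/s..s} r / (s - r + \<eta>/s)))"
    (is "_ \<le> ?K * (?a1 * ?g1 + ?a2 * ?g2)")
proof -
  have s: "s > 0" "s\<^sup>2 = E"
    using E by (simp_all add: s_def)
  have K: "?K \<ge> 0"
    using sphere_area_nonneg by simp
  have terms_nonneg: "?a1 * ?g1 \<ge> 0" "?a2 * ?g2 \<ge> 0"
    using s \<eta> by (auto simp: indicator_def intro!: divide_nonneg_pos add_nonneg_pos)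
  show ?thesis
  proof (cases "0 < r \<and> \<bar>r\<^sup>2 - E\<bar> < 1")
    case shell: True
    then have near: "\<bar>r - s\<bar> \<le> 1 / s"
      using abs_diff_squares_ge[of r s] s by (simp add: field_simps)
    have "r ^ (d - 1) / (\<bar>r\<^sup>2 - E\<bar> + \<eta>) \<le> ?a1 * ?g1 + ?a2 * ?g2"
    proof (cases "r \<ge> s")
      case True
      then have "r ^ (d - 1) / (\<bar>r\<^sup>2 - E\<bar> + \<eta>) \<le> ?a1 * ?g1"
        using power_div_shell_le_outer[OF E \<eta> d] shell near
        by (simp add: s_def indicator_def abs_less_iff)
      then show ?thesis
        using terms_nonneg by linarith
    next
      case False
      then have "r ^ (d - 1) / (\<bar>r\<^sup>2 - E\<bar> + \<eta>) \<le> ?a2 * ?g2"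
        using power_div_shell_le_inner[OF E \<eta> d, of r] shell near
        by (simp add: s_def indicator_def)
      then show ?thesis
        using terms_nonneg by linarith
    qed
    moreover have "radial_density d r * shell_kernel E \<eta> r = ?K * (r ^ (d - 1) / (\<bar>r\<^sup>2 - E\<bar> + \<eta>))"
      using shell by (simp add: radial_density_def shell_kernel_def)
    ultimately show ?thesis
      using K mult_left_mono by metis
  next
    case False
    then have "radial_density d r * shell_kernel E \<eta> r = 0"
      by (auto simp: radial_density_def shell_kernel_def)
    then show ?thesis
      using K terms_nonneg by (metis add_nonneg_nonneg mult_nonneg_nonneg)
  qed
qed

lemma nn_integral_inverse_distance_shell:
  fixes s \<eta> :: real
  assumes "s > 0" "\<eta> > 0"
  shows "(\<integral>\<^sup>+r. ennreal (indicator {s..s + 1/s} r / (r - s + \<eta>/s)) \<partial>lborel) = ennreal (ln (1 / \<eta> + 1))"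
    and "(\<integral>\<^sup>+r. ennreal (indicator {s - 1/s..s} r / (s - r + \<eta>/s)) \<partial>lborel) = ennreal (ln (1 / \<eta> + 1))"
proof -
  have "(1 / s + \<eta> / s) / (\<eta> / s) = 1 / \<eta> + 1"
    using assms by (simp add: field_simps)
  then show "(\<integral>\<^sup>+r. ennreal (indicator {s..s + 1/s} r / (r - s + \<eta>/s)) \<partial>lborel) = ennreal (ln (1 / \<eta> + 1))"
    and "(\<integral>\<^sup>+r. ennreal (indicator {s - 1/s..s} r / (s - r + \<eta>/s)) \<partial>lborel) = ennreal (ln (1 / \<eta> + 1))"
    using nn_integral_inverse_distance_right[of "\<eta> / s" "1 / s" s]
      nn_integral_inverse_distance_left[of "\<eta> / s" "1 / s" s] assms
    by simp_all
qed

lemma nn_integral_radial_shell_kernel_le: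
  fixes E \<eta> :: real
  assumes E: "E > 0" and \<eta>: "\<eta> > 0" and d: "d \<ge> 1"
  shows "(\<integral>\<^sup>+r. ennreal (radial_density d r * shell_kernel E \<eta> r) \<partial>lborel) \<le> ennreal (C1 E d * ln (1 / \<eta> + 1))"
proof -
  define s where "s = sqrt E"
  define a1 where "a1 = sqrt 2 * sphere_area d * ((E + 1) powr ((real d - 1) / 2) * E powr (-1/2))"
  define a2 where "a2 = sqrt 2 * sphere_area d * E powr ((real d - 2) / 2)"
  define g1 where "g1 r = indicator {s..s + 1/s} r / (r - s + \<eta>/s)" for r
  define g2 where "g2 r = indicator {s - 1/s..s} r / (s - r + \<eta>/s)" for r
  have s: "s > 0"
    using E by (simp add: s_def)
  have nonneg: "a1 \<ge> 0" "a2 \<ge> 0" "g1 r \<ge> 0" "g2 r \<ge> 0" for r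
    using s \<eta> sphere_area_nonneg[of d]
    by (auto simp: a1_def a2_def g1_def g2_def indicator_def intro!: divide_nonneg_pos add_nonneg_pos)
  have "(\<integral>\<^sup>+r. ennreal (radial_density d r * shell_kernel E \<eta> r) \<partial>lborel)
      \<le> (\<integral>\<^sup>+r. ennreal a1 * ennreal (g1 r) + ennreal a2 * ennreal (g2 r) \<partial>lborel)"
  proof (intro nn_integral_mono)
    fix r
    have "radial_density d r * shell_kernel E \<eta> r \<le> a1 * g1 r + a2 * g2 r"
      using radial_shell_kernel_le[OF E \<eta> d, of r]
      by (simp add: a1_def a2_def g1_def g2_def s_def algebra_simps)
    then show "ennreal (radial_density d r * shell_kernel E \<eta> r) \<le> ennreal a1 * ennreal (g1 r) + ennreal a2 * ennreal (g2 r)"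
      using nonneg by (simp add: ennreal_mult[symmetric] ennreal_plus[symmetric] del: ennreal_plus)
  qed
  also have "\<dots> = ennreal a1 * (\<integral>\<^sup>+r. ennreal (g1 r) \<partial>lborel) + ennreal a2 * (\<integral>\<^sup>+r. ennreal (g2 r) \<partial>lborel)"
    by (simp add: nn_integral_add nn_integral_cmult g1_def g2_def)
  also have "\<dots> = ennreal ((a1 + a2) * ln (1 / \<eta> + 1))"
    using nn_integral_inverse_distance_shell[OF s \<eta>] nonneg \<eta>
    by (simp add: g1_def g2_def ennreal_mult[symmetric] ennreal_plus[symmetric] distrib_right del: ennreal_plus)
  also have "a1 + a2 = C1 E d"
    by (simp add: C1_def a1_def a2_def algebra_simps)
  finally show ?thesis .
qed

lemma nn_integral_shell_kernel_norm_le: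
  fixes E \<eta> :: real
  assumes E: "E > 0" and \<eta>: "\<eta> > 0"
  shows "(\<integral>\<^sup>+q. ennreal (shell_kernel E \<eta> (norm q)) \<partial>(lborel :: 'a::euclidean_space measure))
    \<le> ennreal (C1 E DIM('a) * ln (1 / \<eta> + 1))"
proof -
  have "(\<integral>\<^sup>+q. ennreal (shell_kernel E \<eta> (norm q)) \<partial>(lborel :: 'a measure))
      = (\<integral>\<^sup>+r. ennreal (radial_density DIM('a) r) * ennreal (shell_kernel E \<eta> r) \<partial>lborel)"
    by (rule nn_integral_radial) measurable
  also have "\<dots> = (\<integral>\<^sup>+r. ennreal (radial_density DIM('a) r * shell_kernel E \<eta> r) \<partial>lborel)"
    using radial_density_nonneg shell_kernel_nonneg[OF \<eta>] by (simp add: ennreal_mult)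
  also have "\<dots> \<le> ennreal (C1 E DIM('a) * ln (1 / \<eta> + 1))"
    by (rule nn_integral_radial_shell_kernel_le[OF E \<eta>]) (simp add: Suc_le_eq)
  finally show ?thesis .
qed

lemma Linf_enorm_nonneg:
  fixes f :: "'a::euclidean_space \<Rightarrow> 'b::real_normed_vector"
  shows "Linf_enorm f \<ge> 0"
proof -
  have "esssup (lborel :: 'a measure) (\<lambda>q. ereal 0) \<le> Linf_enorm f"
    unfolding Linf_enorm_def by (rule esssup_mono) auto
  then show ?thesis
    by (simp add: esssup_const zero_ereal_def)
qed

lemma Linf_norm_nonneg: "Linf_norm f \<ge> 0"
  by (simp add: Linf_norm_def Linf_enorm_nonneg real_of_ereal_pos)

lemma AE_norm_le_Linf_norm:
  assumes "Linf_enorm f < \<infinity>"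
  shows "AE q in lborel. norm (f q) \<le> Linf_norm f"
proof -
  have "Linf_enorm f = ereal (Linf_norm f)"
    using assms Linf_enorm_nonneg[of f] unfolding Linf_norm_def by (cases "Linf_enorm f") auto
  then show ?thesis
    using esssup_AE[where M=lborel and f="\<lambda>q. ereal (norm (f q))"] by (simp add: Linf_enorm_def)
qed

lemma norm_div_resolvent_le:
  fixes y :: complex and r E \<eta> \<sigma> :: real
  assumes y: "cmod y \<le> M" and \<sigma>: "\<sigma> \<in> {-1, 1}" and \<eta>: "\<eta> > 0"
  shows "cmod (y / (complex_of_real (r\<^sup>2 - E) + \<sigma> * \<i> * \<eta>)) \<le> cmod y + M * shell_kernel E \<eta> r"
proof -
  define z where "z = complex_of_real (r\<^sup>2 - E) + \<sigma> * \<i> * \<eta>"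
  have z: "Re z = r\<^sup>2 - E" "\<bar>Im z\<bar> = \<eta>"
    using \<sigma> \<eta> by (auto simp: z_def)
  have kernel_nonneg: "M * shell_kernel E \<eta> r \<ge> 0"
    using y \<eta> norm_ge_zero[of y] by (intro mult_nonneg_nonneg shell_kernel_nonneg) linarith+
  show ?thesis
  proof (cases "\<bar>r\<^sup>2 - E\<bar> < 1")
    case True
    have "\<bar>r\<^sup>2 - E\<bar> + \<eta> \<le> sqrt 2 * cmod z"
      using complex_abs_le_norm[of z] z by simp
    then have "cmod y / cmod z \<le> M / ((\<bar>r\<^sup>2 - E\<bar> + \<eta>) / sqrt 2)"
      using y \<eta> by (intro frac_le) (auto simp: field_simps intro: order_trans[OF norm_ge_zero y])
    also have "\<dots> = M * shell_kernel E \<eta> r"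
      using True by (simp add: shell_kernel_def)
    finally show ?thesis
      unfolding z_def[symmetric] norm_divide using norm_ge_zero[of y] by linarith
  next
    case False
    then have "1 \<le> cmod z"
      using abs_Re_le_cmod[of z] z by simp
    then have "cmod y / cmod z \<le> cmod y"
      by (simp add: divide_le_eq mult_le_cancel_left1)
    then show ?thesis
      unfolding z_def[symmetric] norm_divide using kernel_nonneg by linarith
  qed
qed

lemma nn_integral_norm_div_resolvent_le:
  fixes f :: "'a::euclidean_space \<Rightarrow> complex" and E \<eta> \<sigma> :: real
  assumes "integrable lborel f" and "Linf_enorm f < \<infinity>"
    and E: "E > 0" and \<eta>: "\<eta> > 0" and \<sigma>: "\<sigma> \<in> {-1, 1}"
  shows "(\<integral>\<^sup>+q. cmod (f q / (complex_of_real (norm q ^ 2 - E) + \<sigma> * \<i> * \<eta>)) \<partial>lborel)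
    \<le> ennreal (L1_norm f + Linf_norm f * (C1 E DIM('a) * ln (1 / \<eta> + 1)))"
proof -
  define M where "M = Linf_norm f"
  have M: "M \<ge> 0"
    by (simp add: M_def Linf_norm_nonneg)
  have "(\<integral>\<^sup>+q. cmod (f q / (complex_of_real (norm q ^ 2 - E) + \<sigma> * \<i> * \<eta>)) \<partial>lborel)
      \<le> (\<integral>\<^sup>+q. ennreal (norm (f q)) + ennreal M * ennreal (shell_kernel E \<eta> (norm q)) \<partial>lborel)"
    using AE_norm_le_Linf_norm[OF assms(2)]
  proof (intro nn_integral_mono_AE, elim AE_mp, intro AE_I2 impI)
    fix q
    assume "norm (f q) \<le> Linf_norm f"
    then show "ennreal (cmod (f q / (complex_of_real (norm q ^ 2 - E) + \<sigma> * \<i> * \<eta>)))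
        \<le> ennreal (norm (f q)) + ennreal M * ennreal (shell_kernel E \<eta> (norm q))"
      using norm_div_resolvent_le[OF _ \<sigma> \<eta>] M shell_kernel_nonneg[OF \<eta>]
      by (simp add: M_def ennreal_mult[symmetric] ennreal_plus[symmetric] del: ennreal_plus)
  qed
  also have "\<dots> = ennreal (L1_norm f) + ennreal M * (\<integral>\<^sup>+q. ennreal (shell_kernel E \<eta> (norm q)) \<partial>(lborel :: 'a measure))"
    using assms(1) by (simp add: nn_integral_add nn_integral_cmult L1_norm_def nn_integral_eq_integral)
  also have "\<dots> \<le> ennreal (L1_norm f) + ennreal M * ennreal (C1 E DIM('a) * ln (1 / \<eta> + 1))"
    using nn_integral_shell_kernel_norm_le[OF E \<eta>] by (intro add_mono mult_left_mono) auto
  also have "\<dots> = ennreal (L1_norm f + M * (C1 E DIM('a) * ln (1 / \<eta> + 1)))"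
    using M \<eta> C1_nonneg[of E "DIM('a)"]
    by (simp add: L1_norm_def ennreal_mult[symmetric] ennreal_plus[symmetric] del: ennreal_plus)
  finally show ?thesis
    by (simp add: M_def)
qed

theorem lemma21:
  fixes f :: "'a::euclidean_space \<Rightarrow> complex"
    and E \<eta> \<sigma> :: real
  assumes "integrable lborel f"
    and "Linf_enorm f < \<infinity>"
    and "E > 0" and "\<eta> > 0"
    and "\<sigma> \<in> {-1, 1}"
  shows "cmod (LINT q|lborel. f q / (complex_of_real (norm q ^ 2 - E) + \<sigma> * \<i> * \<eta>))
           \<le> C1 E DIM('a) * Linf_norm f * ln (1 / \<eta> + 1) + sqrt 2 * L1_norm f"
proof -
  have [measurable]: "f \<in> borel_measurable lborel"
    using assms(1) by auto
  have L1: "L1_norm f \<ge> 0"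
    by (simp add: L1_norm_def)
  have "cmod (LINT q|lborel. f q / (complex_of_real (norm q ^ 2 - E) + \<sigma> * \<i> * \<eta>))
      \<le> (LINT q|lborel. cmod (f q / (complex_of_real (norm q ^ 2 - E) + \<sigma> * \<i> * \<eta>)))"
    by (rule integral_norm_bound)
  also have "\<dots> = enn2real (\<integral>\<^sup>+q. cmod (f q / (complex_of_real (norm q ^ 2 - E) + \<sigma> * \<i> * \<eta>)) \<partial>lborel)"
    by (rule integral_eq_nn_integral) auto
  also have "\<dots> \<le> L1_norm f + Linf_norm f * (C1 E DIM('a) * ln (1 / \<eta> + 1))"
    using nn_integral_norm_div_resolvent_le[OF assms] L1 Linf_norm_nonneg[of f] C1_nonneg[of E "DIM('a)"] assms(4)
    by (intro enn2real_leI) auto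
  also have "\<dots> \<le> C1 E DIM('a) * Linf_norm f * ln (1 / \<eta> + 1) + sqrt 2 * L1_norm f"
    using L1 by (simp add: algebra_simps mult_le_cancel_left1)
  finally show ?thesis .
qed

end
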